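(* A forest (undirected) is unary FA-presentable if and only if it can be obtained from a unary FA-presentable directed forest by replacing its edge relation with the symmetric closure of that relation.
   Context: An (undirected) forest is regarded as a structure $(T,\eta)$ with $\eta$ a symmetric irreflexive edge relation whose graph has no cycles; a directed forest is a directed graph obtained from a forest by directing each edge. A structure $(X,\eta)$ is unary FA-presentable if there exist a regular language $L\subseteq a^*$ and a surjection $\phi:L\to X$ such that $\{(u,v)\in L^2:u\phi=v\phi\}$ and $\{(u,v)\in L^2:(u\phi,v\phi)\in\eta\}$ are regular relations (the words $\mathrm{conv}(u,v)$ over $\{a,\$\}^2$, reading $u,v$ in parallel with the shorter padded by $\$$, form regular languages). *)

theory Defs
  imports Main
begin

datatype usym = A

text \<open>Regular languages over an alphabet 'b: accepted by a deterministic finite automaton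
  (finite state set Q, states coded as naturals, total transition function).\<close>
definition regular :: "'b list set \<Rightarrow> bool" where
  "regular L \<longleftrightarrow> (\<exists>(Q::nat set) q0 d F. finite Q \<and> q0 \<in> Q \<and> (\<forall>q\<in>Q. \<forall>x. d q x \<in> Q)
      \<and> F \<subseteq> Q \<and> L = {w. foldl d q0 w \<in> F})"

text \<open>Convolution of two words: read in parallel, the shorter padded with the symbol dollar
  (represented by None).\<close>
definition conv :: "'b list \<Rightarrow> 'b list \<Rightarrow> ('b option \<times> 'b option) list" where
  "conv u v = map (\<lambda>i. (if i < length u then Some (u ! i) else None,
                         if i < length v then Some (v ! i) else None))
                  [0..<max (length u) (length v)]"

definition regular_rel :: "('b list \<times> 'b list) set \<Rightarrow> bool" where
  "regular_rel R \<longleftrightarrow> regular {conv u v | u v. (u, v) \<in> R}"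

definition unary_FA_presentable :: "'a set \<Rightarrow> ('a \<times> 'a) set \<Rightarrow> bool" where
  "unary_FA_presentable X \<eta> \<longleftrightarrow>
     (\<exists>(L :: usym list set) (\<phi> :: usym list \<Rightarrow> 'a).
        regular L \<and> \<phi> ` L = X \<and>
        regular_rel {(u, v). u \<in> L \<and> v \<in> L \<and> \<phi> u = \<phi> v} \<and>
        regular_rel {(u, v). u \<in> L \<and> v \<in> L \<and> (\<phi> u, \<phi> v) \<in> \<eta>})"

definition has_cycle :: "'a set \<Rightarrow> ('a \<times> 'a) set \<Rightarrow> bool" where
  "has_cycle X \<eta> \<longleftrightarrow> (\<exists>xs. length xs \<ge> 3 \<and> distinct xs \<and> set xs \<subseteq> X \<and>
      (\<forall>i < length xs. (xs ! i, xs ! ((i + 1) mod length xs)) \<in> \<eta>))"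

definition forest :: "'a set \<Rightarrow> ('a \<times> 'a) set \<Rightarrow> bool" where
  "forest X \<eta> \<longleftrightarrow> \<eta> \<subseteq> X \<times> X \<and> sym \<eta> \<and> irrefl \<eta> \<and> \<not> has_cycle X \<eta>"

definition directed_forest :: "'a set \<Rightarrow> ('a \<times> 'a) set \<Rightarrow> bool" where
  "directed_forest X \<delta> \<longleftrightarrow> \<delta> \<inter> \<delta>\<inverse> = {} \<and> forest X (\<delta> \<union> \<delta>\<inverse>)"

end

theory Submission
  imports Defs
begin

text \<open>The symmetric closure of a presentable edge relation is presentable because regular
  relations are closed under converse and union. Conversely, given a presentation of a
  forest, first pass to an injective one by keeping only the shortest representative of each
  vertex; over a unary alphabet this is regular, since a word has a shorter equivalent word
  iff some convolution with a word of smaller length lies in the regular equality relation.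
  In an injective unary presentation distinct vertices have representatives of distinct
  lengths, so orienting each edge from the shorter to the longer representative is a
  regular condition and yields a presentable directed forest.\<close>

subsection \<open>Closure properties of regular languages\<close>

lemma foldl_in_closed:
  assumes "\<And>q x. q \<in> Q \<Longrightarrow> d q x \<in> Q" "q \<in> Q"
  shows "foldl d q w \<in> Q"
  using assms(2) by (induction w arbitrary: q) (simp_all add: assms(1))

lemma regularI:
  fixes Q :: "'s set" and d :: "'s \<Rightarrow> 'b \<Rightarrow> 's"
  assumes "finite Q" "q0 \<in> Q" "\<And>q x. q \<in> Q \<Longrightarrow> d q x \<in> Q"
  shows "regular {w. foldl d q0 w \<in> F}"
proof -
  obtain f :: "'s \<Rightarrow> nat" where inj: "inj_on f Q"
    using finite_imp_inj_to_nat_seg[OF assms(1)] by blast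
  define g where "g = inv_into Q f"
  have gf: "q \<in> Q \<Longrightarrow> g (f q) = q" for q
    unfolding g_def using inj by simp
  define d' where "d' = (\<lambda>n x. f (d (g n) x))"
  have run: "q \<in> Q \<Longrightarrow> foldl d' (f q) w = f (foldl d q w)" for q w
    by (induction w arbitrary: q) (simp_all add: d'_def gf assms(3))
  have "{w. foldl d q0 w \<in> F} = {w. foldl d' (f q0) w \<in> f ` (Q \<inter> F)}"
    using run[OF assms(2)] foldl_in_closed[of Q d, OF assms(3,2)] inj
    by (auto simp: inj_on_image_mem_iff)
  moreover have "\<forall>q\<in>f ` Q. \<forall>x. d' q x \<in> f ` Q"
    by (auto simp: d'_def gf assms(3))
  ultimately show ?thesis
    unfolding regular_def using assms(1,2)
    by (intro exI[of _ "f ` Q"] exI[of _ "f q0"] exI[of _ d'] exI[of _ "f ` (Q \<inter> F)"]) auto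
qed

lemma regularE:
  assumes "regular L"
  obtains Q q0 and d :: "nat \<Rightarrow> 'b \<Rightarrow> nat" and F
  where "finite Q" "q0 \<in> Q" "\<And>q x. q \<in> Q \<Longrightarrow> d q x \<in> Q" "L = {w. foldl d q0 w \<in> F}"
  using assms unfolding regular_def by blast

lemma regular_Int:
  assumes "regular L1" "regular L2"
  shows "regular (L1 \<inter> L2)"
proof -
  obtain Q1 q1 and d1 :: "nat \<Rightarrow> 'a \<Rightarrow> nat" and F1 where A1: "finite Q1" "q1 \<in> Q1"
    "\<And>q x. q \<in> Q1 \<Longrightarrow> d1 q x \<in> Q1" "L1 = {w. foldl d1 q1 w \<in> F1}"
    using regularE[OF assms(1)] by blast
  obtain Q2 q2 and d2 :: "nat \<Rightarrow> 'a \<Rightarrow> nat" and F2 where A2: "finite Q2" "q2 \<in> Q2"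
    "\<And>q x. q \<in> Q2 \<Longrightarrow> d2 q x \<in> Q2" "L2 = {w. foldl d2 q2 w \<in> F2}"
    using regularE[OF assms(2)] by blast
  define d where "d = (\<lambda>(p, q) x. (d1 p x, d2 q x))"
  have run: "foldl d (p, q) w = (foldl d1 p w, foldl d2 q w)" for p q w
    by (induction w arbitrary: p q) (simp_all add: d_def)
  have "regular {w. foldl d (q1, q2) w \<in> F1 \<times> F2}"
    by (rule regularI[where Q = "Q1 \<times> Q2"]) (auto simp: A1 A2 d_def)
  then show ?thesis
    by (simp add: run A1(4) A2(4) Collect_conj_eq)
qed

lemma regular_Compl:
  assumes "regular L"
  shows "regular (- L)"
proof -
  obtain Q q0 and d :: "nat \<Rightarrow> 'a \<Rightarrow> nat" and F where A: "finite Q" "q0 \<in> Q"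
    "\<And>q x. q \<in> Q \<Longrightarrow> d q x \<in> Q" "L = {w. foldl d q0 w \<in> F}"
    using regularE[OF assms] by blast
  have "regular {w. foldl d q0 w \<in> - F}"
    by (rule regularI[where Q = Q]) (simp_all add: A)
  then show ?thesis
    by (simp add: A(4) Collect_neg_eq)
qed

lemma regular_Un:
  assumes "regular L1" "regular L2"
  shows "regular (L1 \<union> L2)"
proof -
  have "L1 \<union> L2 = - (- L1 \<inter> - L2)"
    by blast
  then show ?thesis
    using assms by (simp only:) (intro regular_Compl regular_Int)
qed

lemma regular_vimage_concat_map:
  assumes "regular L"
  shows "regular {w. concat (map h w) \<in> L}"
proof -
  obtain Q q0 and d :: "nat \<Rightarrow> 'a \<Rightarrow> nat" and F where A: "finite Q" "q0 \<in> Q"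
    "\<And>q x. q \<in> Q \<Longrightarrow> d q x \<in> Q" "L = {w. foldl d q0 w \<in> F}"
    using regularE[OF assms] by blast
  define d' where "d' = (\<lambda>q x. foldl d q (h x))"
  have run: "foldl d' q w = foldl d q (concat (map h w))" for q w
    by (induction w arbitrary: q) (simp_all add: d'_def)
  have "regular {w. foldl d' q0 w \<in> F}"
    by (rule regularI[where Q = Q]) (auto simp: A d'_def intro: foldl_in_closed)
  then show ?thesis
    by (simp add: run A(4))
qed

lemma regular_vimage_map:
  assumes "regular L"
  shows "regular {w. map h w \<in> L}"
  using regular_vimage_concat_map[OF assms, of "\<lambda>x. [h x]"] by simp

subsection \<open>Convolution\<close>

lemma length_conv [simp]: "length (conv u v) = max (length u) (length v)"
  by (simp add: conv_def)

lemma nth_conv: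
  "i < max (length u) (length v) \<Longrightarrow> conv u v ! i =
     (if i < length u then Some (u ! i) else None, if i < length v then Some (v ! i) else None)"
  by (simp add: conv_def)

lemma conv_Cons_Cons: "conv (a # u) (b # v) = (Some a, Some b) # conv u v"
  by (rule nth_equalityI) (auto simp: nth_conv nth_Cons split: nat.splits)

lemma conv_Nil_left: "conv [] v = map (\<lambda>b. (None, Some b)) v"
  by (rule nth_equalityI) (auto simp: nth_conv)

lemma conv_Nil_right: "conv u [] = map (\<lambda>a. (Some a, None)) u"
  by (rule nth_equalityI) (auto simp: nth_conv)

lemma map_swap_conv: "map prod.swap (conv u v) = conv v u"
  by (rule nth_equalityI) (auto simp: nth_conv)

definition track :: "('c \<times> 'c \<Rightarrow> 'b option) \<Rightarrow> ('c \<times> 'c) list \<Rightarrow> 'b list" where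
  "track f w = concat (map (\<lambda>p. case f p of None \<Rightarrow> [] | Some c \<Rightarrow> [c]) w)"

lemma track_conv: "track fst (conv u v) = u \<and> track snd (conv u v) = v"
proof (induction u arbitrary: v)
  case Nil
  then show ?case by (simp add: conv_Nil_left track_def comp_def)
next
  case (Cons a u)
  then show ?case
    by (cases v) (simp_all add: conv_Cons_Cons conv_Nil_right track_def comp_def)
qed

lemma conv_inject: "conv u v = conv u' v' \<longleftrightarrow> u = u' \<and> v = v'"
  by (metis track_conv)

lemma regular_track_vimage: "regular L \<Longrightarrow> regular {w. track f w \<in> L}"
  unfolding track_def by (rule regular_vimage_concat_map)

lemma conv_last_padded_left:
  "(conv u v \<noteq> [] \<and> fst (last (conv u v)) = None) \<longleftrightarrow> length u < length v"
proof (cases "conv u v = []")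
  case True
  then have "max (length u) (length v) = 0"
    by (metis length_conv list.size(3))
  then show ?thesis
    using True by simp
next
  case False
  then have "max (length u) (length v) - 1 < max (length u) (length v)"
    by (metis length_conv length_greater_0_conv diff_less zero_less_one)
  with False show ?thesis
    by (simp add: last_conv_nth nth_conv) linarith
qed

lemma regular_last_padded_left:
  "regular {w :: ('b option \<times> 'c) list. w \<noteq> [] \<and> fst (last w) = None}"
proof -
  define d :: "nat \<Rightarrow> 'b option \<times> 'c \<Rightarrow> nat" where "d = (\<lambda>q x. if fst x = None then 1 else 2)"
  have run: "foldl d q w = (if w = [] then q else if fst (last w) = None then 1 else 2)" for q w
    by (induction w arbitrary: q) (auto simp: d_def)
  have "regular {w. foldl d 0 w \<in> {1}}"
    by (rule regularI[where Q = "{0, 1, 2}"]) (auto simp: d_def)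
  moreover have "{w. foldl d 0 w \<in> {1}} = {w. w \<noteq> [] \<and> fst (last w) = None}"
    by (auto simp: run)
  ultimately show ?thesis
    by simp
qed

subsection \<open>Regular relations\<close>

lemma regular_rel_converse:
  assumes "regular_rel R"
  shows "regular_rel (R\<inverse>)"
proof -
  have swap_swap_list: "map prod.swap (map prod.swap w) = w" for w :: "('b \<times> 'c) list"
    by (induction w) auto
  have "{conv u v |u v. (u, v) \<in> R\<inverse>} = {w. map prod.swap w \<in> {conv u v |u v. (u, v) \<in> R}}"
  proof (intro equalityI subsetI)
    fix w assume "w \<in> {conv u v |u v. (u, v) \<in> R\<inverse>}"
    then show "w \<in> {w. map prod.swap w \<in> {conv u v |u v. (u, v) \<in> R}}"
      by (auto simp: map_swap_conv) blast
  next
    fix w assume "w \<in> {w. map prod.swap w \<in> {conv u v |u v. (u, v) \<in> R}}"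
    then obtain u v where "map prod.swap w = conv u v" "(u, v) \<in> R"
      by blast
    then have "w = conv v u" "(v, u) \<in> R\<inverse>"
      using swap_swap_list[of w] by (auto simp: map_swap_conv)
    then show "w \<in> {conv u v |u v. (u, v) \<in> R\<inverse>}"
      by blast
  qed
  then show ?thesis
    using regular_vimage_map[OF assms[unfolded regular_rel_def], of prod.swap]
    unfolding regular_rel_def by simp
qed

lemma regular_rel_Un: "regular_rel R \<Longrightarrow> regular_rel S \<Longrightarrow> regular_rel (R \<union> S)"
  unfolding regular_rel_def
  by (drule (1) regular_Un)
    (simp add: Collect_disj_eq[symmetric] conj_disj_distribL ex_disj_distrib setcompr_eq_image)

lemma regular_rel_restrict:
  assumes "regular_rel R" "regular W"
  shows "regular_rel (R \<inter> {(u, v). conv u v \<in> W})"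
proof -
  have "{conv u v |u v. (u, v) \<in> R \<inter> {(u, v). conv u v \<in> W}} = {conv u v |u v. (u, v) \<in> R} \<inter> W"
    by blast
  with assms show ?thesis
    unfolding regular_rel_def by (simp only:) (rule regular_Int)
qed

lemma regular_rel_Int_Times:
  assumes "regular_rel R" "regular L"
  shows "regular_rel (R \<inter> L \<times> L)"
proof -
  have "R \<inter> L \<times> L = R \<inter> {(u, v). conv u v \<in> {w. track fst w \<in> L} \<inter> {w. track snd w \<in> L}}"
    by (auto simp: track_conv)
  then show ?thesis
    using assms by (simp only:) (intro regular_rel_restrict regular_Int regular_track_vimage)
qed

lemma regular_rel_Int_length_less:
  assumes "regular_rel R"
  shows "regular_rel (R \<inter> {(u, v). length u < length v})"
proof -
  have "R \<inter> {(u, v). length u < length v} =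
      R \<inter> {(u, v). conv u v \<in> {w. w \<noteq> [] \<and> fst (last w) = None}}"
    by (auto simp: conv_last_padded_left)
  then show ?thesis
    using assms by (simp only:) (intro regular_rel_restrict regular_last_padded_left)
qed

subsection \<open>Unary words\<close>

lemma usym_list_eq_replicate: "(u :: usym list) = replicate (length u) A"
proof (induction u)
  case (Cons x u)
  then show ?case by (cases x) simp
qed simp

lemma inj_length_usym_list: "inj (length :: usym list \<Rightarrow> nat)"
  by (metis injI usym_list_eq_replicate)

lemma conv_replicate:
  "n \<le> m \<Longrightarrow> conv (replicate m a) (replicate n b) =
     replicate n (Some a, Some b) @ replicate (m - n) (Some a, None)"
  by (rule nth_equalityI) (auto simp: nth_conv nth_append)

lemma foldl_runs_with_shorter_prefix:
  fixes d :: "'s \<Rightarrow> 'c \<Rightarrow> 's" and x y :: 'c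
  defines "d' \<equiv> \<lambda>(p, T) (_ :: 'a). (d p x, (\<lambda>t. d t y) ` insert p T)"
  shows "foldl d' (q0, {}) (replicate m a) =
    (foldl d q0 (replicate m x), (\<lambda>n. foldl d q0 (replicate n x @ replicate (m - n) y)) ` {..<m})"
proof (induction m)
  case 0
  then show ?case by simp
next
  case (Suc m)
  have step: "foldl d q0 (replicate n x @ replicate (Suc m - n) y) =
      d (foldl d q0 (replicate n x @ replicate (m - n) y)) y" if "n \<le> m" for n
    using that by (simp add: Suc_diff_le flip: replicate_append_same)
  have "{..<Suc m} = insert m {..<m}"
    by auto
  then have "(\<lambda>n. foldl d q0 (replicate n x @ replicate (Suc m - n) y)) ` {..<Suc m} =
      (\<lambda>t. d t y) ` insert (foldl d q0 (replicate m x))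
        ((\<lambda>n. foldl d q0 (replicate n x @ replicate (m - n) y)) ` {..<m})"
    using step by (simp add: image_image)
  then show ?case
    using Suc by (simp add: d'_def flip: replicate_append_same)
qed

lemma regular_has_shorter_partner:
  assumes "regular K"
  shows "regular {u :: usym list. \<exists>v. length v < length u \<and> conv u v \<in> K}"
proof -
  obtain Q q0 and d :: "nat \<Rightarrow> usym option \<times> usym option \<Rightarrow> nat" and F where A: "finite Q"
    "q0 \<in> Q" "\<And>q x. q \<in> Q \<Longrightarrow> d q x \<in> Q" "K = {w. foldl d q0 w \<in> F}"
    using regularE[OF assms] by blast
  \<comment> \<open>subset construction: \<open>T\<close> collects the states reached on \<open>conv u v\<close> for the
    words \<open>v\<close> shorter than the prefix \<open>u\<close> read so far\<close>
  define d' where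
    "d' = (\<lambda>(p, T) (_ :: usym). (d p (Some A, Some A), (\<lambda>t. d t (Some A, None)) ` insert p T))"
  have "regular {w. foldl d' (q0, {}) w \<in> {(p, T). T \<inter> F \<noteq> {}}}"
    by (rule regularI[where Q = "Q \<times> Pow Q"]) (auto simp: A d'_def)
  moreover have "foldl d' (q0, {}) u \<in> {(p, T). T \<inter> F \<noteq> {}} \<longleftrightarrow>
      (\<exists>v. length v < length u \<and> conv u v \<in> K)" for u :: "usym list"
  proof -
    have "foldl d' (q0, {}) u \<in> {(p, T). T \<inter> F \<noteq> {}} \<longleftrightarrow>
        (\<exists>n < length u. conv u (replicate n A) \<in> K)"
      using foldl_runs_with_shorter_prefix[of d "(Some A, Some A)" "(Some A, None)" q0 "length u" A]
      by (subst (1 2) usym_list_eq_replicate) (auto simp: d'_def A(4) conv_replicate)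
    also have "\<dots> \<longleftrightarrow> (\<exists>v. length v < length u \<and> conv u v \<in> K)"
      by (metis length_replicate usym_list_eq_replicate)
    finally show ?thesis .
  qed
  ultimately show ?thesis
    by simp
qed

subsection \<open>Presentations\<close>

definition FA_presentation ::
    "usym list set \<Rightarrow> (usym list \<Rightarrow> 'a) \<Rightarrow> 'a set \<Rightarrow> ('a \<times> 'a) set \<Rightarrow> bool" where
  "FA_presentation L \<phi> X R \<longleftrightarrow> regular L \<and> \<phi> ` L = X \<and>
     regular_rel {(u, v). u \<in> L \<and> v \<in> L \<and> \<phi> u = \<phi> v} \<and>
     regular_rel {(u, v). u \<in> L \<and> v \<in> L \<and> (\<phi> u, \<phi> v) \<in> R}"

lemma unary_FA_presentable_iff: "unary_FA_presentable X R \<longleftrightarrow> (\<exists>L \<phi>. FA_presentation L \<phi> X R)"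
  unfolding unary_FA_presentable_def FA_presentation_def by blast

lemma FA_presentation_symcl:
  assumes "FA_presentation L \<phi> X R"
  shows "FA_presentation L \<phi> X (R \<union> R\<inverse>)"
proof -
  let ?E = "{(u, v). u \<in> L \<and> v \<in> L \<and> (\<phi> u, \<phi> v) \<in> R}"
  have "{(u, v). u \<in> L \<and> v \<in> L \<and> (\<phi> u, \<phi> v) \<in> R \<union> R\<inverse>} = ?E \<union> ?E\<inverse>"
    by blast
  with assms show ?thesis
    unfolding FA_presentation_def by (simp add: regular_rel_Un regular_rel_converse)
qed

lemma FA_presentation_restrict:
  assumes "FA_presentation L \<phi> X R" "regular L'" "L' \<subseteq> L" "\<phi> ` L' = X"
  shows "FA_presentation L' \<phi> X R"
proof -
  have "{(u, v). u \<in> L' \<and> v \<in> L' \<and> P u v} = {(u, v). u \<in> L \<and> v \<in> L \<and> P u v} \<inter> L' \<times> L'"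
    for P :: "usym list \<Rightarrow> usym list \<Rightarrow> bool"
    using assms(3) by blast
  with assms show ?thesis
    unfolding FA_presentation_def by (simp add: regular_rel_Int_Times)
qed

lemma FA_presentation_shortest_representatives:
  assumes "FA_presentation L \<phi> X R"
  defines "L' \<equiv> {u \<in> L. \<forall>v \<in> L. \<phi> v = \<phi> u \<longrightarrow> length u \<le> length v}"
  shows "FA_presentation L' \<phi> X R" "inj_on \<phi> L'"
proof -
  let ?E = "{conv u v |u v. (u, v) \<in> {(u, v). u \<in> L \<and> v \<in> L \<and> \<phi> u = \<phi> v}}"
  have "L' = L \<inter> - {u. \<exists>v. length v < length u \<and> conv u v \<in> ?E}"
    unfolding L'_def by (auto simp: conv_inject not_le)
  moreover have "regular L" "regular ?E"
    using assms(1) unfolding FA_presentation_def regular_rel_def by auto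
  ultimately have "regular L'"
    by (simp only:) (intro regular_Int regular_Compl regular_has_shorter_partner)
  moreover have "\<phi> ` L' = X"
  proof
    show "\<phi> ` L' \<subseteq> X"
      using assms(1) unfolding FA_presentation_def L'_def by blast
  next
    show "X \<subseteq> \<phi> ` L'"
    proof
      fix x assume "x \<in> X"
      then obtain u0 where "u0 \<in> L" "\<phi> u0 = x"
        using assms(1) unfolding FA_presentation_def by blast
      then obtain u where "u \<in> L" "\<phi> u = x" "\<And>v. v \<in> L \<and> \<phi> v = x \<Longrightarrow> length u \<le> length v"
        using ex_has_least_nat[of "\<lambda>u. u \<in> L \<and> \<phi> u = x" u0 length] by blast
      then show "x \<in> \<phi> ` L'"
        unfolding L'_def by force
    qed
  qed
  ultimately show "FA_presentation L' \<phi> X R"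
    using assms(1) FA_presentation_restrict unfolding L'_def by blast
  show "inj_on \<phi> L'"
    by (rule inj_onI) (metis (mono_tags, lifting) L'_def mem_Collect_eq le_antisym
        inj_length_usym_list injD)
qed

lemma orient_by_rank:
  fixes r :: "'b \<Rightarrow> 'c :: linorder"
  assumes "inj_on \<phi> L" "inj_on r L" "R \<subseteq> \<phi> ` L \<times> \<phi> ` L" "sym R" "irrefl R"
  defines "D \<equiv> {(\<phi> u, \<phi> v) |u v. u \<in> L \<and> v \<in> L \<and> (\<phi> u, \<phi> v) \<in> R \<and> r u < r v}"
  shows "D \<inter> D\<inverse> = {}" "D \<union> D\<inverse> = R"
proof -
  have "False" if xy: "(x, y) \<in> D" and yx: "(y, x) \<in> D" for x y
  proof -
    obtain u v where uv: "x = \<phi> u" "y = \<phi> v" "u \<in> L" "v \<in> L" "r u < r v"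
      using xy unfolding D_def by blast
    obtain u' v' where u'v': "y = \<phi> u'" "x = \<phi> v'" "u' \<in> L" "v' \<in> L" "r u' < r v'"
      using yx unfolding D_def by blast
    have "u' = v" "v' = u"
      using uv u'v' inj_onD[OF assms(1)] by metis+
    then show False
      using uv(5) u'v'(5) by simp
  qed
  then show "D \<inter> D\<inverse> = {}"
    by blast
  show "D \<union> D\<inverse> = R"
  proof
    show "D \<union> D\<inverse> \<subseteq> R"
      using assms(4) unfolding D_def sym_def by blast
  next
    show "R \<subseteq> D \<union> D\<inverse>"
    proof
      fix p assume "p \<in> R"
      then obtain u v where uv: "p = (\<phi> u, \<phi> v)" "u \<in> L" "v \<in> L"
        using assms(3) by blast
      have "(\<phi> v, \<phi> u) \<in> R"
        using \<open>p \<in> R\<close> assms(4) uv(1) unfolding sym_def by blast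
      have "u \<noteq> v"
        using \<open>p \<in> R\<close> assms(5) uv(1) unfolding irrefl_def by blast
      then have "r u < r v \<or> r v < r u"
        using inj_onD[OF assms(2)] uv(2,3) by (metis neqE)
      then show "p \<in> D \<union> D\<inverse>"
        using uv \<open>p \<in> R\<close> \<open>(\<phi> v, \<phi> u) \<in> R\<close> unfolding D_def by blast
    qed
  qed
qed

lemma FA_presentation_orient_by_length:
  assumes "FA_presentation L \<phi> X R" "inj_on \<phi> L"
  shows "FA_presentation L \<phi> X
    {(\<phi> u, \<phi> v) |u v. u \<in> L \<and> v \<in> L \<and> (\<phi> u, \<phi> v) \<in> R \<and> length u < length v}"
    (is "FA_presentation L \<phi> X ?D")
proof -
  have "{(u, v). u \<in> L \<and> v \<in> L \<and> (\<phi> u, \<phi> v) \<in> ?D} =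
      {(u, v). u \<in> L \<and> v \<in> L \<and> (\<phi> u, \<phi> v) \<in> R} \<inter> {(u, v). length u < length v}"
    using assms(2) by (auto dest: inj_onD)
  with assms(1) show ?thesis
    unfolding FA_presentation_def by (simp add: regular_rel_Int_length_less)
qed

theorem theorem6p13:
  fixes X :: "'a set" and \<eta> :: "('a \<times> 'a) set"
  assumes "forest X \<eta>"
  shows "unary_FA_presentable X \<eta> \<longleftrightarrow>
    (\<exists>\<delta>. directed_forest X \<delta> \<and> \<delta> \<union> \<delta>\<inverse> = \<eta> \<and> unary_FA_presentable X \<delta>)"
proof
  assume "\<exists>\<delta>. directed_forest X \<delta> \<and> \<delta> \<union> \<delta>\<inverse> = \<eta> \<and> unary_FA_presentable X \<delta>"
  then show "unary_FA_presentable X \<eta>"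
    unfolding unary_FA_presentable_iff using FA_presentation_symcl by blast
next
  assume "unary_FA_presentable X \<eta>"
  then obtain L and \<phi> :: "usym list \<Rightarrow> 'a" where "FA_presentation L \<phi> X \<eta>"
    unfolding unary_FA_presentable_iff by blast
  then obtain L' where pres: "FA_presentation L' \<phi> X \<eta>" and inj: "inj_on \<phi> L'"
    using FA_presentation_shortest_representatives by blast
  define \<delta> where
    "\<delta> = {(\<phi> u, \<phi> v) |u v. u \<in> L' \<and> v \<in> L' \<and> (\<phi> u, \<phi> v) \<in> \<eta> \<and> length u < length v}"
  have "\<eta> \<subseteq> \<phi> ` L' \<times> \<phi> ` L'" "sym \<eta>" "irrefl \<eta>"
    using assms pres unfolding forest_def FA_presentation_def by auto
  then have "\<delta> \<inter> \<delta>\<inverse> = {}" "\<delta> \<union> \<delta>\<inverse> = \<eta>"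
    using orient_by_rank[OF inj inj_on_subset[OF inj_length_usym_list]] unfolding \<delta>_def by auto
  moreover have "FA_presentation L' \<phi> X \<delta>"
    unfolding \<delta>_def using pres inj by (rule FA_presentation_orient_by_length)
  ultimately show "\<exists>\<delta>. directed_forest X \<delta> \<and> \<delta> \<union> \<delta>\<inverse> = \<eta> \<and> unary_FA_presentable X \<delta>"
    using assms unfolding directed_forest_def unary_FA_presentable_iff by auto
qed

end
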